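(* Let $\kappa$ be a cardinal, $\mathscr A$ an infinite set and $\{X_\alpha:\alpha\in\mathscr A\}$ a family of Banach spaces each of which is $\mathrm{ASQ}_{<\kappa}$. If $\mathcal U$ is an $\aleph_1$-incomplete non-principal ultrafilter over $\mathscr A$, then the ultraproduct $(X_\alpha)_{\mathcal U}$ is $\mathrm{SQ}_{<\kappa}$.
   Context: A non-principal ultrafilter $\mathcal U$ over $\mathscr A$ is $\aleph_1$-incomplete if it is not closed under countable intersections (equivalently, there is $f:\mathscr A\to(0,\infty)$ with $\lim_{\mathcal U}f(\alpha)=0$). The ultraproduct $(X_\alpha)_{\mathcal U}$ is the quotient $\ell_\infty(\mathscr A,X_\alpha)/c_{0,\mathcal U}(\mathscr A,X_\alpha)$, where $\ell_\infty(\mathscr A,X_\alpha)$ consists of bounded families $(x_\alpha)$ with $x_\alpha\in X_\alpha$ under the sup norm and $c_{0,\mathcal U}$ is the subspace of families with $\lim_{\mathcal U}\|x_\alpha\|=0$; its norm satisfies $\|(x_\alpha)_{\mathcal U}\|=\lim_{\mathcal U}\|x_\alpha\|$. A Banach space $Z$ is $\mathrm{ASQ}_{<\kappa}$ if for every set $A\subset S_Z$ with $|A|<\kappa$ and every $\varepsilon>0$ there exists $y\in S_Z$ with $\|x\pm y\|\le 1+\varepsilon$ for all $x\in A$; $Z$ is $\mathrm{SQ}_{<\kappa}$ if for every such $A$ there exists $y\in S_Z$ with $\|x\pm y\|\le 1$ for all $x\in A$. *)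

theory Defs
  imports "HOL-Analysis.Analysis"
begin

text \<open>A (real) Banach space is modelled as a closed, i.e. complete, linear subspace of an
ambient real normed vector space; the norm is the ambient norm.\<close>
definition banach_subspace :: "'x::real_normed_vector set \<Rightarrow> bool" where
  "banach_subspace Z \<longleftrightarrow> subspace Z \<and> complete Z"

text \<open>Ultrafilters over a set I, represented as filters on the ambient type concentrated on I.\<close>
definition ultrafilter_over :: "'a set \<Rightarrow> 'a filter \<Rightarrow> bool" where
  "ultrafilter_over I U \<longleftrightarrow> U \<noteq> bot \<and> eventually (\<lambda>\<alpha>. \<alpha> \<in> I) U \<and>
     (\<forall>S \<subseteq> I. eventually (\<lambda>\<alpha>. \<alpha> \<in> S) U \<or> eventually (\<lambda>\<alpha>. \<alpha> \<in> I - S) U)"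

definition non_principal :: "'a filter \<Rightarrow> bool" where
  "non_principal U \<longleftrightarrow> (\<forall>\<alpha>. \<not> eventually (\<lambda>\<beta>. \<beta> = \<alpha>) U)"

definition aleph1_incomplete :: "'a filter \<Rightarrow> bool" where
  "aleph1_incomplete U \<longleftrightarrow> (\<exists>N :: nat \<Rightarrow> 'a set. (\<forall>n. eventually (\<lambda>\<alpha>. \<alpha> \<in> N n) U) \<and>
      \<not> eventually (\<lambda>\<alpha>. \<forall>n. \<alpha> \<in> N n) U)"

definition ASQ_lt_gen :: "'z set \<Rightarrow> ('z \<Rightarrow> real) \<Rightarrow> ('z \<Rightarrow> 'z \<Rightarrow> 'z) \<Rightarrow> ('z \<Rightarrow> 'z \<Rightarrow> 'z)
    \<Rightarrow> 'k rel \<Rightarrow> bool" where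
  "ASQ_lt_gen Z Nm pl mi \<kappa> \<longleftrightarrow>
    (\<forall>A. A \<subseteq> {z \<in> Z. Nm z = 1} \<longrightarrow> ordLess2 (card_of A) \<kappa> \<longrightarrow>
      (\<forall>\<epsilon>>0. \<exists>y\<in>Z. Nm y = 1 \<and> (\<forall>x\<in>A. Nm (pl x y) \<le> 1 + \<epsilon> \<and> Nm (mi x y) \<le> 1 + \<epsilon>)))"

definition SQ_lt_gen :: "'z set \<Rightarrow> ('z \<Rightarrow> real) \<Rightarrow> ('z \<Rightarrow> 'z \<Rightarrow> 'z) \<Rightarrow> ('z \<Rightarrow> 'z \<Rightarrow> 'z)
    \<Rightarrow> 'k rel \<Rightarrow> bool" where
  "SQ_lt_gen Z Nm pl mi \<kappa> \<longleftrightarrow>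
    (\<forall>A. A \<subseteq> {z \<in> Z. Nm z = 1} \<longrightarrow> ordLess2 (card_of A) \<kappa> \<longrightarrow>
      (\<exists>y\<in>Z. Nm y = 1 \<and> (\<forall>x\<in>A. Nm (pl x y) \<le> 1 \<and> Nm (mi x y) \<le> 1)))"

definition ASQ_lt :: "'x::real_normed_vector set \<Rightarrow> 'k rel \<Rightarrow> bool" where
  "ASQ_lt Z \<kappa> \<longleftrightarrow> ASQ_lt_gen Z norm (+) (-) \<kappa>"

definition ell_inf :: "'a set \<Rightarrow> ('a \<Rightarrow> 'x::real_normed_vector set) \<Rightarrow> ('a \<Rightarrow> 'x) set" where
  "ell_inf I X = {f. (\<forall>\<alpha>\<in>I. f \<alpha> \<in> X \<alpha>) \<and> (\<forall>\<alpha>. \<alpha> \<notin> I \<longrightarrow> f \<alpha> = 0) \<and>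
      bdd_above ((\<lambda>\<alpha>. norm (f \<alpha>)) ` I)}"

definition c0U :: "'a set \<Rightarrow> ('a \<Rightarrow> 'x::real_normed_vector set) \<Rightarrow> 'a filter \<Rightarrow> ('a \<Rightarrow> 'x) set" where
  "c0U I X U = {f \<in> ell_inf I X. ((\<lambda>\<alpha>. norm (f \<alpha>)) \<longlongrightarrow> 0) U}"

definition uclass :: "'a set \<Rightarrow> ('a \<Rightarrow> 'x::real_normed_vector set) \<Rightarrow> 'a filter \<Rightarrow> ('a \<Rightarrow> 'x)
    \<Rightarrow> ('a \<Rightarrow> 'x) set" where
  "uclass I X U f = {g \<in> ell_inf I X. (\<lambda>\<alpha>. f \<alpha> - g \<alpha>) \<in> c0U I X U}"

definition ultraproduct :: "'a set \<Rightarrow> ('a \<Rightarrow> 'x::real_normed_vector set) \<Rightarrow> 'a filter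
    \<Rightarrow> ('a \<Rightarrow> 'x) set set" where
  "ultraproduct I X U = uclass I X U ` ell_inf I X"

definition unorm :: "'a filter \<Rightarrow> ('a \<Rightarrow> 'x::real_normed_vector) set \<Rightarrow> real" where
  "unorm U c = Lim U (\<lambda>\<alpha>. norm ((SOME f. f \<in> c) \<alpha>))"

definition uadd :: "'a set \<Rightarrow> ('a \<Rightarrow> 'x::real_normed_vector set) \<Rightarrow> 'a filter
    \<Rightarrow> ('a \<Rightarrow> 'x) set \<Rightarrow> ('a \<Rightarrow> 'x) set \<Rightarrow> ('a \<Rightarrow> 'x) set" where
  "uadd I X U c d = uclass I X U (\<lambda>\<alpha>. (SOME f. f \<in> c) \<alpha> + (SOME g. g \<in> d) \<alpha>)"

definition usub :: "'a set \<Rightarrow> ('a \<Rightarrow> 'x::real_normed_vector set) \<Rightarrow> 'a filter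
    \<Rightarrow> ('a \<Rightarrow> 'x) set \<Rightarrow> ('a \<Rightarrow> 'x) set \<Rightarrow> ('a \<Rightarrow> 'x) set" where
  "usub I X U c d = uclass I X U (\<lambda>\<alpha>. (SOME f. f \<in> c) \<alpha> - (SOME g. g \<in> d) \<alpha>)"

definition ultraproduct_SQ_lt :: "'a set \<Rightarrow> ('a \<Rightarrow> 'x::real_normed_vector set) \<Rightarrow> 'a filter
    \<Rightarrow> 'k rel \<Rightarrow> bool" where
  "ultraproduct_SQ_lt I X U \<kappa> \<longleftrightarrow>
     SQ_lt_gen (ultraproduct I X U) (unorm U) (uadd I X U) (usub I X U) \<kappa>"

end

theory Submission
  imports Defs
begin

(* Represent the elements c of a set A of unit vectors of the ultraproduct, |A| < \<kappa>, by
   families f_c.  In each coordinate \<alpha>, ASQ of X_\<alpha> applied to the normalised vectors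
   sgn (f_c \<alpha>) with tolerance \<epsilon> \<alpha> yields a unit vector y \<alpha> with
   \<parallel>f_c \<alpha> \<plusminus> y \<alpha>\<parallel> \<le> 1 + \<epsilon> \<alpha> + |\<parallel>f_c \<alpha>\<parallel> - 1|.
   Since U is \<aleph>_1-incomplete, the tolerances can be chosen positive with lim_U \<epsilon> = 0, while
   lim_U \<parallel>f_c\<parallel> = 1; so the class Y of y is a unit vector with \<parallel>c \<plusminus> Y\<parallel> \<le> 1 exactly:
   the errors disappear in the limit. *)

lemma ultrafilter_over_eventually_cases:
  assumes "ultrafilter_over I U"
  shows "eventually P U \<or> eventually (\<lambda>x. \<not> P x) U"
proof -
  have "\<forall>S\<subseteq>I. eventually (\<lambda>x. x \<in> S) U \<or> eventually (\<lambda>x. x \<in> I - S) U"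
    using assms unfolding ultrafilter_over_def by (elim conjE)
  from this[rule_format, OF Collect_subset[of I P]]
  show ?thesis
  proof
    assume "eventually (\<lambda>x. x \<in> {x\<in>I. P x}) U"
    then show ?thesis
      by (simp add: eventually_mono)
  next
    assume "eventually (\<lambda>x. x \<in> I - {x\<in>I. P x}) U"
    then show ?thesis
      by (simp add: eventually_mono)
  qed
qed

lemma ultrafilter_tendsto_in_compact:
  fixes g :: "'a \<Rightarrow> 'b::topological_space"
  assumes "F \<noteq> bot" and ultra: "\<And>P. eventually P F \<or> eventually (\<lambda>x. \<not> P x) F"
    and "compact K" and "eventually (\<lambda>x. g x \<in> K) F"
  shows "\<exists>L\<in>K. (g \<longlongrightarrow> L) F"
proof -
  obtain L where "L \<in> K" and cluster: "inf (nhds L) (filtermap g F) \<noteq> bot"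
    using compact_filter[THEN iffD1, OF \<open>compact K\<close>, rule_format, of "filtermap g F"] assms
    by (auto simp: filtermap_bot_iff eventually_filtermap)
  have "eventually (\<lambda>x. g x \<in> S) F" if "open S" "L \<in> S" for S
  proof (rule ccontr)
    assume "\<not> eventually (\<lambda>x. g x \<in> S) F"
    then have "eventually (\<lambda>y. y \<notin> S) (filtermap g F)"
      using ultra by (auto simp: eventually_filtermap)
    moreover have "eventually (\<lambda>y. y \<in> S) (nhds L)"
      using that by (rule eventually_nhds_in_open)
    ultimately have "eventually (\<lambda>y. False) (inf (nhds L) (filtermap g F))"
      unfolding eventually_inf by blast
    with cluster show False
      by (simp add: eventually_False)
  qed
  with \<open>L \<in> K\<close> show ?thesis
    unfolding tendsto_def by blast
qed

lemma aleph1_incomplete_positive_null: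
  assumes "aleph1_incomplete U" and ultra: "\<And>P. eventually P U \<or> eventually (\<lambda>x. \<not> P x) U"
  obtains \<epsilon> :: "'a \<Rightarrow> real" where "\<And>\<alpha>. \<epsilon> \<alpha> > 0" and "(\<epsilon> \<longlongrightarrow> 0) U"
proof -
  obtain N :: "nat \<Rightarrow> 'a set" where N: "\<And>n. eventually (\<lambda>\<alpha>. \<alpha> \<in> N n) U"
    and "\<not> eventually (\<lambda>\<alpha>. \<forall>n. \<alpha> \<in> N n) U"
    using assms(1) unfolding aleph1_incomplete_def by blast
  then have escape: "eventually (\<lambda>\<alpha>. \<exists>n. \<alpha> \<notin> N n) U"
    using ultra[of "\<lambda>\<alpha>. \<forall>n. \<alpha> \<in> N n"] by simp
  define d where "d \<alpha> = (LEAST n. \<alpha> \<notin> N n)" for \<alpha>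
  have "filterlim d at_top U"
    unfolding filterlim_at_top
  proof
    fix m
    have "eventually (\<lambda>\<alpha>. \<forall>k\<in>{..<m}. \<alpha> \<in> N k) U"
      using N by (simp add: eventually_ball_finite)
    then show "eventually (\<lambda>\<alpha>. m \<le> d \<alpha>) U"
      using escape
    proof (rule eventually_elim2)
      fix \<alpha> assume "\<forall>k\<in>{..<m}. \<alpha> \<in> N k" and "\<exists>n. \<alpha> \<notin> N n"
      then show "m \<le> d \<alpha>"
        unfolding d_def by (metis LeastI_ex lessThan_iff not_le)
    qed
  qed
  then have "((\<lambda>\<alpha>. inverse (real (Suc (d \<alpha>)))) \<longlongrightarrow> 0) U"
    by (rule filterlim_compose[OF LIMSEQ_inverse_real_of_nat])
  then show thesis
    by (rule that[rotated]) simp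
qed

lemma norm_add_le_norm_sgn_add:
  fixes x y :: "'a::real_normed_vector"
  shows "norm (x + y) \<le> norm (sgn x + y) + \<bar>norm x - 1\<bar>"
proof -
  have "norm (x - sgn x) \<le> \<bar>norm x - 1\<bar>"
  proof (cases "x = 0")
    case False
    then have "x - sgn x = (norm x - 1) *\<^sub>R sgn x"
      by (simp add: sgn_div_norm algebra_simps)
    with False show ?thesis
      by (simp add: norm_sgn)
  qed simp
  moreover have "norm (x + y) \<le> norm (sgn x + y) + norm (x - sgn x)"
    using norm_triangle_ineq[of "sgn x + y" "x - sgn x"] by (simp add: add.commute)
  ultimately show ?thesis
    by linarith
qed

lemma ASQ_lt_nonunit:
  assumes "ASQ_lt Z \<kappa>" and "subspace Z" and "B \<subseteq> Z" and "(card_of B, \<kappa>) \<in> ordLess" and "e > 0"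
  shows "\<exists>y\<in>Z. norm y = 1 \<and>
    (\<forall>x\<in>B. norm (x + y) \<le> 1 + e + \<bar>norm x - 1\<bar> \<and> norm (x - y) \<le> 1 + e + \<bar>norm x - 1\<bar>)"
proof -
  let ?S = "sgn ` (B - {0})"
  have "?S \<subseteq> {z \<in> Z. norm z = 1}"
    using assms(2,3) by (auto simp: sgn_div_norm norm_sgn intro: subspace_scale)
  moreover have "(card_of ?S, \<kappa>) \<in> ordLess"
    using ordLeq_transitive[OF card_of_image card_of_mono1[of "B - {0}" B]] assms(4)
    by (blast intro: ordLeq_ordLess_trans)
  ultimately obtain y where "y \<in> Z" and "norm y = 1"
    and y: "\<And>s. s \<in> ?S \<Longrightarrow> norm (s + y) \<le> 1 + e \<and> norm (s - y) \<le> 1 + e"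
    using assms(1,5) unfolding ASQ_lt_def ASQ_lt_gen_def by meson
  have sgn_bounds: "norm (sgn x + y) \<le> 1 + e \<and> norm (sgn x + - y) \<le> 1 + e" if "x \<in> B" for x
    using that y[of "sgn x"] \<open>norm y = 1\<close> \<open>e > 0\<close> by (cases "x = 0") auto
  have "norm (x + y) \<le> 1 + e + \<bar>norm x - 1\<bar> \<and> norm (x - y) \<le> 1 + e + \<bar>norm x - 1\<bar>"
    if "x \<in> B" for x
    using sgn_bounds[OF that] norm_add_le_norm_sgn_add[of x y] norm_add_le_norm_sgn_add[of x "-y"]
    by fastforce
  with \<open>y \<in> Z\<close> \<open>norm y = 1\<close> show ?thesis
    by blast
qed

lemma ell_inf_iff:
  "f \<in> ell_inf I X \<longleftrightarrow> (\<forall>\<alpha>\<in>I. f \<alpha> \<in> X \<alpha>) \<and> (\<forall>\<alpha>. \<alpha> \<notin> I \<longrightarrow> f \<alpha> = 0) \<and>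
     (\<exists>B. \<forall>\<alpha>\<in>I. norm (f \<alpha>) \<le> B)"
  unfolding ell_inf_def bdd_above_def by auto

lemma tendsto_norm_zero_diff_trans:
  fixes f g h :: "'a \<Rightarrow> 'b::real_normed_vector"
  assumes "((\<lambda>x. norm (f x - g x)) \<longlongrightarrow> 0) F" and "((\<lambda>x. norm (g x - h x)) \<longlongrightarrow> 0) F"
  shows "((\<lambda>x. norm (f x - h x)) \<longlongrightarrow> 0) F"
proof (rule Lim_null_comparison)
  show "eventually (\<lambda>x. norm (norm (f x - h x)) \<le> norm (f x - g x) + norm (g x - h x)) F"
    by (simp add: norm_diff_triangle_le[OF order_refl order_refl])
  show "((\<lambda>x. norm (f x - g x) + norm (g x - h x)) \<longlongrightarrow> 0) F"
    using tendsto_add_zero[OF assms] .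
qed

lemma tendsto_norm_if_close:
  fixes f g :: "'a \<Rightarrow> 'b::real_normed_vector"
  assumes "((\<lambda>x. norm (f x)) \<longlongrightarrow> L) F" and "((\<lambda>x. norm (f x - g x)) \<longlongrightarrow> 0) F"
  shows "((\<lambda>x. norm (g x)) \<longlongrightarrow> L) F"
proof -
  have "((\<lambda>x. norm (g x) - norm (f x)) \<longlongrightarrow> 0) F"
  proof (rule Lim_null_comparison[OF _ assms(2)])
    show "eventually (\<lambda>x. norm (norm (g x) - norm (f x)) \<le> norm (f x - g x)) F"
      using norm_triangle_ineq3[of "g _" "f _"] by (simp add: norm_minus_commute)
  qed
  from tendsto_add[OF this assms(1)] show ?thesis
    by simp
qed

locale ultraproduct_space =
  fixes I :: "'a set" and X :: "'a \<Rightarrow> 'x::real_normed_vector set" and U :: "'a filter"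
  assumes ultrafilter_U: "ultrafilter_over I U"
    and subspace_X: "\<And>\<alpha>. \<alpha> \<in> I \<Longrightarrow> subspace (X \<alpha>)"
begin

lemma U_ne_bot: "U \<noteq> bot"
  using ultrafilter_U unfolding ultrafilter_over_def by blast

lemma eventually_in_I: "eventually (\<lambda>\<alpha>. \<alpha> \<in> I) U"
  using ultrafilter_U unfolding ultrafilter_over_def by blast

lemma ell_inf_add_diff:
  assumes "f \<in> ell_inf I X" and "g \<in> ell_inf I X"
  shows "(\<lambda>\<alpha>. f \<alpha> + g \<alpha>) \<in> ell_inf I X" and "(\<lambda>\<alpha>. f \<alpha> - g \<alpha>) \<in> ell_inf I X"
proof -
  obtain Bf Bg where "\<forall>\<alpha>\<in>I. norm (f \<alpha>) \<le> Bf" and "\<forall>\<alpha>\<in>I. norm (g \<alpha>) \<le> Bg"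
    using assms unfolding ell_inf_iff by blast
  then have "\<forall>\<alpha>\<in>I. norm (f \<alpha> + g \<alpha>) \<le> Bf + Bg \<and> norm (f \<alpha> - g \<alpha>) \<le> Bf + Bg"
    by (meson add_mono norm_triangle_le norm_triangle_le_diff)
  with assms show "(\<lambda>\<alpha>. f \<alpha> + g \<alpha>) \<in> ell_inf I X" and "(\<lambda>\<alpha>. f \<alpha> - g \<alpha>) \<in> ell_inf I X"
    unfolding ell_inf_iff by (auto intro: subspace_add subspace_diff subspace_X)
qed

lemma mem_uclass_iff:
  assumes "f \<in> ell_inf I X"
  shows "g \<in> uclass I X U f \<longleftrightarrow> g \<in> ell_inf I X \<and> ((\<lambda>\<alpha>. norm (f \<alpha> - g \<alpha>)) \<longlongrightarrow> 0) U"
  using assms ell_inf_add_diff(2) unfolding uclass_def c0U_def by blast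

lemma self_in_uclass: "f \<in> ell_inf I X \<Longrightarrow> f \<in> uclass I X U f"
  by (simp add: mem_uclass_iff)

lemma uclass_eq:
  assumes "f \<in> ell_inf I X" and "g \<in> ell_inf I X" and "((\<lambda>\<alpha>. norm (f \<alpha> - g \<alpha>)) \<longlongrightarrow> 0) U"
  shows "uclass I X U f = uclass I X U g"
proof -
  have "((\<lambda>\<alpha>. norm (g \<alpha> - f \<alpha>)) \<longlongrightarrow> 0) U"
    using assms(3) by (simp add: norm_minus_commute)
  with assms show ?thesis
    unfolding set_eq_iff mem_uclass_iff[OF assms(1)] mem_uclass_iff[OF assms(2)]
    by (blast intro: tendsto_norm_zero_diff_trans)
qed

lemma some_in_uclass:
  assumes "f \<in> ell_inf I X"
  shows "(SOME g. g \<in> uclass I X U f) \<in> ell_inf I X"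
    and "((\<lambda>\<alpha>. norm (f \<alpha> - (SOME g. g \<in> uclass I X U f) \<alpha>)) \<longlongrightarrow> 0) U"
  using someI[of "\<lambda>g. g \<in> uclass I X U f", OF self_in_uclass[OF assms]]
  unfolding mem_uclass_iff[OF assms] by blast+

lemma tendsto_unorm_uclass:
  assumes "f \<in> ell_inf I X"
  shows "((\<lambda>\<alpha>. norm (f \<alpha>)) \<longlongrightarrow> unorm U (uclass I X U f)) U"
proof -
  obtain B where B: "\<forall>\<alpha>\<in>I. norm (f \<alpha>) \<le> B"
    using assms unfolding ell_inf_iff by blast
  have bounded: "eventually (\<lambda>\<alpha>. norm (f \<alpha>) \<in> {0..B}) U"
    using eventually_in_I by (rule eventually_mono) (simp add: B)
  obtain L where L: "((\<lambda>\<alpha>. norm (f \<alpha>)) \<longlongrightarrow> L) U"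
    using ultrafilter_tendsto_in_compact[OF U_ne_bot ultrafilter_over_eventually_cases[OF ultrafilter_U]
        compact_Icc bounded]
    by blast
  then have "unorm U (uclass I X U f) = L"
    unfolding unorm_def using tendsto_norm_if_close[OF L some_in_uclass(2)[OF assms]] U_ne_bot
    by (simp add: tendsto_Lim)
  with L show ?thesis
    by simp
qed

lemma unorm_uclass_eq:
  "f \<in> ell_inf I X \<Longrightarrow> ((\<lambda>\<alpha>. norm (f \<alpha>)) \<longlongrightarrow> L) U \<Longrightarrow> unorm U (uclass I X U f) = L"
  using tendsto_unique[OF U_ne_bot tendsto_unorm_uclass] by blast

lemma unorm_uclass_le:
  assumes "f \<in> ell_inf I X" and "eventually (\<lambda>\<alpha>. norm (f \<alpha>) \<le> b \<alpha>) U" and "(b \<longlongrightarrow> L) U"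
  shows "unorm U (uclass I X U f) \<le> L"
  using tendsto_le[OF U_ne_bot assms(3) tendsto_unorm_uclass[OF assms(1)] assms(2)] .

lemma uadd_usub_uclass:
  assumes "f \<in> ell_inf I X" and "g \<in> ell_inf I X"
  shows "uadd I X U (uclass I X U f) (uclass I X U g) = uclass I X U (\<lambda>\<alpha>. f \<alpha> + g \<alpha>)"
    and "usub I X U (uclass I X U f) (uclass I X U g) = uclass I X U (\<lambda>\<alpha>. f \<alpha> - g \<alpha>)"
proof -
  let ?rf = "SOME h. h \<in> uclass I X U f" and ?rg = "SOME h. h \<in> uclass I X U g"
  have null: "((\<lambda>\<alpha>. norm (f \<alpha> - ?rf \<alpha>) + norm (g \<alpha> - ?rg \<alpha>)) \<longlongrightarrow> 0) U"
    using tendsto_add_zero[OF some_in_uclass(2)[OF assms(1)] some_in_uclass(2)[OF assms(2)]] .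
  have "(?rf \<alpha> + ?rg \<alpha>) - (f \<alpha> + g \<alpha>) = (?rf \<alpha> - f \<alpha>) + (?rg \<alpha> - g \<alpha>)"
    and "(?rf \<alpha> - ?rg \<alpha>) - (f \<alpha> - g \<alpha>) = (?rf \<alpha> - f \<alpha>) - (?rg \<alpha> - g \<alpha>)" for \<alpha>
    by (simp_all add: algebra_simps)
  then have "norm ((?rf \<alpha> + ?rg \<alpha>) - (f \<alpha> + g \<alpha>)) \<le> norm (f \<alpha> - ?rf \<alpha>) + norm (g \<alpha> - ?rg \<alpha>)"
    and "norm ((?rf \<alpha> - ?rg \<alpha>) - (f \<alpha> - g \<alpha>)) \<le> norm (f \<alpha> - ?rf \<alpha>) + norm (g \<alpha> - ?rg \<alpha>)" for \<alpha>
    by (metis norm_minus_commute norm_triangle_ineq norm_triangle_ineq4)+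
  then have add_null: "((\<lambda>\<alpha>. norm ((?rf \<alpha> + ?rg \<alpha>) - (f \<alpha> + g \<alpha>))) \<longlongrightarrow> 0) U"
    and diff_null: "((\<lambda>\<alpha>. norm ((?rf \<alpha> - ?rg \<alpha>) - (f \<alpha> - g \<alpha>))) \<longlongrightarrow> 0) U"
    by (auto intro!: Lim_null_comparison[OF _ null])
  have rf: "?rf \<in> ell_inf I X" and rg: "?rg \<in> ell_inf I X"
    using some_in_uclass(1) assms by blast+
  show "uadd I X U (uclass I X U f) (uclass I X U g) = uclass I X U (\<lambda>\<alpha>. f \<alpha> + g \<alpha>)"
    unfolding uadd_def
    by (rule uclass_eq[OF ell_inf_add_diff(1)[OF rf rg] ell_inf_add_diff(1)[OF assms] add_null])
  show "usub I X U (uclass I X U f) (uclass I X U g) = uclass I X U (\<lambda>\<alpha>. f \<alpha> - g \<alpha>)"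
    unfolding usub_def
    by (rule uclass_eq[OF ell_inf_add_diff(2)[OF rf rg] ell_inf_add_diff(2)[OF assms] diff_null])
qed

lemma ell_inf_almost_square:
  assumes ASQ: "\<And>\<alpha>. \<alpha> \<in> I \<Longrightarrow> ASQ_lt (X \<alpha>) \<kappa>"
    and "F \<subseteq> ell_inf I X" and "(card_of F, \<kappa>) \<in> ordLess" and "\<And>\<alpha>. \<epsilon> \<alpha> > 0"
  shows "\<exists>y\<in>ell_inf I X. (\<forall>\<alpha>\<in>I. norm (y \<alpha>) = 1) \<and> (\<forall>f\<in>F. \<forall>\<alpha>\<in>I.
      norm (f \<alpha> + y \<alpha>) \<le> 1 + \<epsilon> \<alpha> + \<bar>norm (f \<alpha>) - 1\<bar> \<and>
      norm (f \<alpha> - y \<alpha>) \<le> 1 + \<epsilon> \<alpha> + \<bar>norm (f \<alpha>) - 1\<bar>)"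
proof -
  define good where "good \<alpha> y \<longleftrightarrow> y \<in> X \<alpha> \<and> norm y = 1 \<and> (\<forall>f\<in>F.
      norm (f \<alpha> + y) \<le> 1 + \<epsilon> \<alpha> + \<bar>norm (f \<alpha>) - 1\<bar> \<and>
      norm (f \<alpha> - y) \<le> 1 + \<epsilon> \<alpha> + \<bar>norm (f \<alpha>) - 1\<bar>)" for \<alpha> y
  have "\<forall>\<alpha>\<in>I. \<exists>y. good \<alpha> y"
  proof
    fix \<alpha> assume "\<alpha> \<in> I"
    have "(\<lambda>f. f \<alpha>) ` F \<subseteq> X \<alpha>"
      using assms(2) \<open>\<alpha> \<in> I\<close> by (auto simp: ell_inf_iff)
    moreover have "(card_of ((\<lambda>f. f \<alpha>) ` F), \<kappa>) \<in> ordLess"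
      using card_of_image assms(3) by (rule ordLeq_ordLess_trans)
    ultimately have "\<exists>y\<in>X \<alpha>. norm y = 1 \<and> (\<forall>x\<in>(\<lambda>f. f \<alpha>) ` F.
        norm (x + y) \<le> 1 + \<epsilon> \<alpha> + \<bar>norm x - 1\<bar> \<and> norm (x - y) \<le> 1 + \<epsilon> \<alpha> + \<bar>norm x - 1\<bar>)"
      by (rule ASQ_lt_nonunit[OF ASQ[OF \<open>\<alpha> \<in> I\<close>] subspace_X[OF \<open>\<alpha> \<in> I\<close>] _ _ assms(4)])
    then show "\<exists>y. good \<alpha> y"
      unfolding good_def by auto
  qed
  then obtain y0 where y0: "\<forall>\<alpha>\<in>I. good \<alpha> (y0 \<alpha>)"
    using bchoice by blast
  define y where "y \<alpha> = (if \<alpha> \<in> I then y0 \<alpha> else 0)" for \<alpha>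
  have "y \<in> ell_inf I X"
    unfolding ell_inf_iff y_def using y0 unfolding good_def by (auto intro!: exI[of _ 1])
  moreover have "\<forall>\<alpha>\<in>I. norm (y \<alpha>) = 1"
    using y0 unfolding good_def y_def by simp
  moreover have "\<forall>f\<in>F. \<forall>\<alpha>\<in>I. norm (f \<alpha> + y \<alpha>) \<le> 1 + \<epsilon> \<alpha> + \<bar>norm (f \<alpha>) - 1\<bar> \<and>
      norm (f \<alpha> - y \<alpha>) \<le> 1 + \<epsilon> \<alpha> + \<bar>norm (f \<alpha>) - 1\<bar>"
    using y0 unfolding good_def y_def by simp
  ultimately show ?thesis
    by blast
qed

theorem SQ_lt_ultraproduct:
  fixes \<epsilon> :: "'a \<Rightarrow> real"
  assumes ASQ: "\<And>\<alpha>. \<alpha> \<in> I \<Longrightarrow> ASQ_lt (X \<alpha>) \<kappa>"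
    and \<epsilon>_pos: "\<And>\<alpha>. \<epsilon> \<alpha> > 0" and \<epsilon>_null: "(\<epsilon> \<longlongrightarrow> 0) U"
  shows "ultraproduct_SQ_lt I X U \<kappa>"
  unfolding ultraproduct_SQ_lt_def SQ_lt_gen_def
proof (intro allI impI)
  fix A assume A: "A \<subseteq> {c \<in> ultraproduct I X U. unorm U c = 1}"
    and card_A: "(card_of A, \<kappa>) \<in> ordLess"
  have "\<forall>c\<in>A. \<exists>g. g \<in> ell_inf I X \<and> uclass I X U g = c"
    using A unfolding ultraproduct_def by (auto simp: image_iff)
  then obtain f where f: "\<And>c. c \<in> A \<Longrightarrow> f c \<in> ell_inf I X"
    and class_f: "\<And>c. c \<in> A \<Longrightarrow> uclass I X U (f c) = c"
    by (metis bchoice)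
  have norm_f: "((\<lambda>\<alpha>. norm (f c \<alpha>)) \<longlongrightarrow> 1) U" if "c \<in> A" for c
    using tendsto_unorm_uclass[OF f[OF that]] class_f[OF that] A that by auto
  have "f ` A \<subseteq> ell_inf I X"
    using f by blast
  from ell_inf_almost_square[where \<epsilon> = \<epsilon>,
      OF ASQ this ordLeq_ordLess_trans[OF card_of_image card_A] \<epsilon>_pos]
  obtain y where y: "y \<in> ell_inf I X" and unit_y: "\<forall>\<alpha>\<in>I. norm (y \<alpha>) = 1"
    and y_bounds: "\<forall>c\<in>A. \<forall>\<alpha>\<in>I.
      norm (f c \<alpha> + y \<alpha>) \<le> 1 + \<epsilon> \<alpha> + \<bar>norm (f c \<alpha>) - 1\<bar> \<and>
      norm (f c \<alpha> - y \<alpha>) \<le> 1 + \<epsilon> \<alpha> + \<bar>norm (f c \<alpha>) - 1\<bar>"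
    by (auto simp: ball_simps)
  have "unorm U (uclass I X U y) = 1"
  proof (rule unorm_uclass_eq[OF y])
    have "eventually (\<lambda>\<alpha>. norm (y \<alpha>) = 1) U"
      using eventually_in_I by (rule eventually_mono) (simp add: unit_y)
    then show "((\<lambda>\<alpha>. norm (y \<alpha>)) \<longlongrightarrow> 1) U"
      by (rule tendsto_eventually)
  qed
  moreover have "unorm U (uadd I X U c (uclass I X U y)) \<le> 1 \<and>
      unorm U (usub I X U c (uclass I X U y)) \<le> 1" if "c \<in> A" for c
  proof -
    have "((\<lambda>\<alpha>. 1 + \<epsilon> \<alpha> + \<bar>norm (f c \<alpha>) - 1\<bar>) \<longlongrightarrow> 1 + 0 + \<bar>1 - 1\<bar>) U"
      by (intro tendsto_intros \<epsilon>_null norm_f that)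
    then have bound: "((\<lambda>\<alpha>. 1 + \<epsilon> \<alpha> + \<bar>norm (f c \<alpha>) - 1\<bar>) \<longlongrightarrow> 1) U"
      by simp
    have "eventually (\<lambda>\<alpha>. norm (f c \<alpha> + y \<alpha>) \<le> 1 + \<epsilon> \<alpha> + \<bar>norm (f c \<alpha>) - 1\<bar>) U"
      and "eventually (\<lambda>\<alpha>. norm (f c \<alpha> - y \<alpha>) \<le> 1 + \<epsilon> \<alpha> + \<bar>norm (f c \<alpha>) - 1\<bar>) U"
      using eventually_in_I by (rule eventually_mono, use y_bounds that in simp)+
    moreover have "uadd I X U c (uclass I X U y) = uclass I X U (\<lambda>\<alpha>. f c \<alpha> + y \<alpha>)"
      and "usub I X U c (uclass I X U y) = uclass I X U (\<lambda>\<alpha>. f c \<alpha> - y \<alpha>)"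
      using uadd_usub_uclass[OF f[OF that] y] class_f[OF that] by simp_all
    ultimately show ?thesis
      using ell_inf_add_diff[OF f[OF that] y] unorm_uclass_le[OF _ _ bound] by simp
  qed
  moreover have "uclass I X U y \<in> ultraproduct I X U"
    unfolding ultraproduct_def using y by blast
  ultimately show "\<exists>Y\<in>ultraproduct I X U. unorm U Y = 1 \<and>
      (\<forall>c\<in>A. unorm U (uadd I X U c Y) \<le> 1 \<and> unorm U (usub I X U c Y) \<le> 1)"
    by blast
qed

end

theorem theorem4p8:
  fixes \<kappa> :: "'k rel" and I :: "'a set" and X :: "'a \<Rightarrow> 'x::real_normed_vector set"
    and U :: "'a filter"
  assumes "Card_order \<kappa>"
    and "infinite I"
    and "\<forall>\<alpha>\<in>I. banach_subspace (X \<alpha>) \<and> ASQ_lt (X \<alpha>) \<kappa>"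
    and "ultrafilter_over I U" and "non_principal U" and "aleph1_incomplete U"
  shows "ultraproduct_SQ_lt I X U \<kappa>"
proof -
  interpret ultraproduct_space I X U
    using assms(3,4) by unfold_locales (auto simp: banach_subspace_def)
  obtain \<epsilon> :: "'a \<Rightarrow> real" where "\<And>\<alpha>. \<epsilon> \<alpha> > 0" and "(\<epsilon> \<longlongrightarrow> 0) U"
    using aleph1_incomplete_positive_null[OF assms(6) ultrafilter_over_eventually_cases[OF assms(4)]]
    by blast
  then show ?thesis
    by (rule SQ_lt_ultraproduct[rotated]) (use assms(3) in blast)
qed

end
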